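(* In the setting of the RoPE kernel $h_R((x,s),(y,t))=\beta^{-1}\exp(\beta\langle x,R_{\omega(t-s)}y\rangle)$ on $\mathbb S^{2}\times I$, assume $d=3$, $E=\mathrm{span}\{e_1,e_2\}$ and $\omega=2\pi m$ with $m\in\mathbb Z\setminus\{0\}$. Let $u\in\mathbb S^2$ have polar angle $\theta\in[0,\pi]$, i.e. $\langle u,e_3\rangle=\cos\theta$. Then $x^\ast(s)=R_{-\omega s}u$ defines a global maximizer $\mu^\ast=\Gamma[x^\ast]$ of $\mathcal E_R[\mu]=\frac12\iint h_R\,d\mu\,d\mu$ on $\mathcal P_I$, and its content marginal $(x^\ast)_{\#}ds$ is the uniform (normalized arc-length) probability measure on the circle $\{v\in\mathbb S^2:\langle v,e_3\rangle=\cos\theta\}$ (a Dirac mass when $\theta\in\{0,\pi\}$).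
   Context: $I:=(0,1]$ with Lebesgue measure $ds$; $\mathcal P_I$ is the set of Borel probability measures on $\mathbb S^{d-1}\times I$ with $I$-marginal $ds$. For $\theta\in\mathbb R$, $R_\theta\in O(d)$ rotates by angle $\theta$ on the plane $E$ and is the identity on $E^\perp$. For a measurable path $x:I\to\mathbb S^{d-1}$, $\Gamma[x]:=(s\mapsto(x(s),s))_{\#}ds$. $\beta>0$. *)

theory Defs
  imports "HOL-Probability.Probability"
begin

definition S2 :: "(real^3) set" where
  "S2 = {x. norm x = 1}"

definition Itime :: "real set" where
  "Itime = {0<..1}"

definition ds :: "real measure" where
  "ds = density lborel (indicator Itime)"

definition Rot :: "real \<Rightarrow> real^3 \<Rightarrow> real^3" where
  "Rot \<theta> v = vector [cos \<theta> * v$1 - sin \<theta> * v$2, sin \<theta> * v$1 + cos \<theta> * v$2, v$3]"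

definition P_I :: "((real^3) \<times> real) measure set" where
  "P_I = {\<mu>. prob_space \<mu> \<and> sets \<mu> = sets (borel :: ((real^3) \<times> real) measure)
             \<and> emeasure \<mu> (- (S2 \<times> Itime)) = 0
             \<and> distr \<mu> borel snd = ds}"

definition Gamma :: "(real \<Rightarrow> real^3) \<Rightarrow> ((real^3) \<times> real) measure" where
  "Gamma x = distr ds borel (\<lambda>s. (x s, s))"

definition hR :: "real \<Rightarrow> real \<Rightarrow> (real^3) \<times> real \<Rightarrow> (real^3) \<times> real \<Rightarrow> real" where
  "hR \<beta> \<omega> p q = exp (\<beta> * (fst p \<bullet> Rot (\<omega> * (snd q - snd p)) (fst q))) / \<beta>"

definition ER :: "real \<Rightarrow> real \<Rightarrow> ((real^3) \<times> real) measure \<Rightarrow> real" where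
  "ER \<beta> \<omega> \<mu> = (1/2) * (\<integral>p. (\<integral>q. hR \<beta> \<omega> p q \<partial>\<mu>) \<partial>\<mu>)"

text \<open>Uniform (normalized arc-length) probability measure on the circle
  {v in S^2. <v,e3> = cos theta}, via its constant-speed parametrization
  (Dirac mass at the pole when theta in {0, pi}).\<close>
definition circle_uniform :: "real \<Rightarrow> (real^3) measure" where
  "circle_uniform \<theta> = distr (uniform_measure lborel {0..2*pi}) borel
     (\<lambda>\<phi>. vector [sin \<theta> * cos \<phi>, sin \<theta> * sin \<phi>, cos \<theta>])"

end

theory Submission
  imports Defs "HOL-Library.Periodic_Fun"
begin

(* Along x*, the rotation in the kernel exactly undoes the drift of the path:
   R_{omega (t - s)} x*(t) = x*(s), so h_R is identically exp beta / beta on the support of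
   Gamma[x*] x Gamma[x*]. By Cauchy-Schwarz this is the pointwise maximum of h_R on S^2 x I,
   hence Gamma[x*] attains the trivial upper bound exp beta / (2 beta) of E_R; this part does
   not need omega in 2 pi Z.
   Writing u = (sin theta cos alpha, sin theta sin alpha, cos theta), the point x*(s) is the
   point of the latitude circle at longitude alpha - 2 pi m s. As s runs through (0,1] this
   winds |m| times around the circle at constant speed, and the integral of a 2 pi-periodic
   function over |m| full periods is |m| times its integral over one period, so the
   push-forward of ds is the normalized arc length. *)

lemma inner_vec3: "(x::real^3) \<bullet> y = x$1 * y$1 + x$2 * y$2 + x$3 * y$3"
  by (simp add: inner_vec_def sum_3)

lemma continuous_on_vector3 [continuous_intros]:
  assumes "continuous_on S f" "continuous_on S g" "continuous_on S h"
  shows "continuous_on S (\<lambda>x. vector [f x, g x, h x] :: real^3)"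
proof -
  have "(\<lambda>x. vector [f x, g x, h x] :: real^3)
      = (\<lambda>x. f x *\<^sub>R axis 1 1 + g x *\<^sub>R axis 2 1 + h x *\<^sub>R axis 3 1)"
    by (simp add: fun_eq_iff vec_eq_iff forall_3 axis_def)
  then show ?thesis by (simp only:) (intro continuous_intros assms)
qed

lemma continuous_on_Rot [continuous_intros]:
  fixes S :: "'a::t2_space set"
  assumes "continuous_on S f" "continuous_on S g"
  shows "continuous_on S (\<lambda>x. Rot (f x) (g x))"
  unfolding Rot_def by (intro continuous_intros assms)

lemma Rot_add: "Rot a (Rot b v) = Rot (a + b) v"
  by (simp add: Rot_def vec_eq_iff forall_3 cos_add sin_add algebra_simps)

lemma inner_Rot_Rot: "Rot a v \<bullet> Rot a w = v \<bullet> w"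
proof -
  have "Rot a v \<bullet> Rot a w = (cos a * v$1 - sin a * v$2) * (cos a * w$1 - sin a * w$2)
      + (sin a * v$1 + cos a * v$2) * (sin a * w$1 + cos a * w$2) + v$3 * w$3"
    by (simp add: Rot_def inner_vec3)
  also have "\<dots> = v \<bullet> w"
    using sin_cos_squared_add[of a] unfolding inner_vec3 by algebra
  finally show ?thesis .
qed

lemma norm_Rot: "norm (Rot a v) = norm v"
  by (simp add: norm_eq_sqrt_inner inner_Rot_Rot)

definition latitude_point :: "real \<Rightarrow> real \<Rightarrow> real^3" where
  "latitude_point \<theta> \<phi> = vector [sin \<theta> * cos \<phi>, sin \<theta> * sin \<phi>, cos \<theta>]"

lemma Rot_latitude_point: "Rot b (latitude_point \<theta> a) = latitude_point \<theta> (a + b)"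
  by (simp add: Rot_def latitude_point_def vec_eq_iff forall_3 cos_add sin_add algebra_simps)

lemma continuous_on_latitude_point: "continuous_on UNIV (latitude_point \<theta>)"
  unfolding latitude_point_def by (intro continuous_intros)

lemma periodic_latitude_point: "periodic_fun_simple (latitude_point \<theta>) (2 * pi)"
  by standard (simp add: latitude_point_def)

lemma circle_uniform_eq:
  "circle_uniform \<theta> = distr (uniform_measure lborel {0..2 * pi}) borel (latitude_point \<theta>)"
  by (simp add: circle_uniform_def latitude_point_def [abs_def])

lemma polar_coords_radius:
  fixes x y r :: real
  assumes "x\<^sup>2 + y\<^sup>2 = r\<^sup>2" "0 \<le> r"
  obtains a where "x = r * cos a" "y = r * sin a"
proof -
  let ?z = "Complex x y"
  have "cmod ?z = r" using assms by (simp add: cmod_def)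
  then have "?z = rcis r (Arg ?z)" using rcis_cmod_Arg[of ?z] by simp
  then have "x = r * cos (Arg ?z)" "y = r * sin (Arg ?z)"
    by (simp_all add: complex_eq_iff rcis_def cis.ctr)
  then show ?thesis by (rule that)
qed

lemma S2_obtain_latitude_point:
  assumes "u \<in> S2" "0 \<le> \<theta>" "\<theta> \<le> pi" "u \<bullet> axis 3 1 = cos \<theta>"
  obtains \<alpha> where "u = latitude_point \<theta> \<alpha>"
proof -
  have u3: "u$3 = cos \<theta>" using assms(4) by (simp add: inner_vec3 axis_def)
  have "u \<bullet> u = 1" using assms(1) by (simp add: S2_def flip: power2_norm_eq_inner)
  then have "(u$1)\<^sup>2 + (u$2)\<^sup>2 + (cos \<theta>)\<^sup>2 = 1"
    using u3 by (simp add: inner_vec3 power2_eq_square)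
  then have "(u$1)\<^sup>2 + (u$2)\<^sup>2 = (sin \<theta>)\<^sup>2"
    by (simp add: sin_squared_eq)
  moreover have "sin \<theta> \<ge> 0" using assms by (simp add: sin_ge_zero)
  ultimately obtain \<alpha> where "u$1 = sin \<theta> * cos \<alpha>" "u$2 = sin \<theta> * sin \<alpha>"
    by (rule polar_coords_radius)
  with u3 show ?thesis using that by (auto simp: latitude_point_def vec_eq_iff forall_3)
qed

lemma sets_ds [simp, measurable_cong]: "sets ds = sets borel"
  by (simp add: ds_def)

lemma space_ds [simp]: "space ds = UNIV"
  by (simp add: ds_def)

lemma emeasure_ds: "A \<in> sets borel \<Longrightarrow> emeasure ds A = emeasure lborel (A \<inter> Itime)"
  unfolding ds_def Itime_def
  by (subst emeasure_density) (auto simp: indicator_inter_arith[symmetric] mult.commute)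

lemma prob_space_ds: "prob_space ds"
  by standard (simp add: emeasure_ds Itime_def)

lemma nn_integral_ds:
  "f \<in> borel_measurable borel \<Longrightarrow> (\<integral>\<^sup>+s. f s \<partial>ds) = (\<integral>\<^sup>+s. f s * indicator {0<..1} s \<partial>lborel)"
  unfolding ds_def Itime_def by (simp add: nn_integral_density mult.commute)

lemma S2_Itime_sets: "S2 \<times> Itime \<in> sets (borel :: ((real^3) \<times> real) measure)"
proof -
  have "closed S2"
    using closed_sphere[of "0 :: real^3" 1] by (simp add: S2_def sphere_def)
  then have "S2 \<times> Itime \<in> sets (borel \<Otimes>\<^sub>M borel)"
    by (intro pair_measureI) (auto simp: Itime_def intro: borel_closed)
  then show ?thesis by (simp only: borel_prod)
qed

lemma Gamma_in_P_I:
  assumes [measurable]: "x \<in> borel_measurable borel" and S2: "\<forall>s\<in>Itime. x s \<in> S2"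
  shows "Gamma x \<in> P_I"
proof -
  interpret ds: prob_space ds by (rule prob_space_ds)
  have graph [measurable]: "(\<lambda>s. (x s, s)) \<in> measurable ds borel"
    by measurable
  have snd: "snd \<in> borel_measurable (borel :: ((real^3) \<times> real) measure)"
    by (intro borel_measurable_continuous_onI continuous_intros)
  have "(\<lambda>s. (x s, s)) -` (- (S2 \<times> Itime)) \<inter> space ds = - Itime"
    using S2 by auto
  then have "emeasure (Gamma x) (- (S2 \<times> Itime)) = 0"
    using S2_Itime_sets unfolding Gamma_def
    by (simp add: emeasure_distr sets.compl_sets emeasure_ds Itime_def)
  moreover have "distr (Gamma x) borel snd = ds"
    unfolding Gamma_def by (simp add: distr_distr[OF snd graph] comp_def distr_id2)
  moreover have "prob_space (Gamma x)"
    unfolding Gamma_def by (rule ds.prob_space_distr[OF graph])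
  ultimately show ?thesis by (simp add: P_I_def Gamma_def)
qed

lemma (in prob_space) integral_le_nonneg_const:
  fixes f :: "'a \<Rightarrow> real"
  assumes "0 \<le> c" "AE x in M. f x \<le> c"
  shows "(\<integral>x. f x \<partial>M) \<le> c"
  using integral_le_const[of f c] assms
  by (cases "integrable M f") (auto simp: not_integrable_integral_eq)

lemma hR_le_exp:
  assumes "\<beta> > 0" "fst p \<in> S2" "fst q \<in> S2"
  shows "hR \<beta> \<omega> p q \<le> exp \<beta> / \<beta>"
proof -
  let ?y = "Rot (\<omega> * (snd q - snd p)) (fst q)"
  have "fst p \<bullet> ?y \<le> norm (fst p) * norm ?y" by (rule norm_cauchy_schwarz)
  also have "\<dots> = 1" using assms by (simp add: norm_Rot S2_def)
  finally show ?thesis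
    using assms(1) by (simp add: hR_def divide_right_mono)
qed

lemma ER_le_P_I:
  assumes "\<beta> > 0" "\<mu> \<in> P_I"
  shows "ER \<beta> \<omega> \<mu> \<le> exp \<beta> / (2 * \<beta>)"
proof -
  interpret prob_space \<mu> using assms(2) by (simp add: P_I_def)
  have bound: "0 \<le> exp \<beta> / \<beta>" using assms(1) by simp
  have S2: "AE p in \<mu>. fst p \<in> S2"
    using assms(2) S2_Itime_sets by (intro AE_I'[of "- (S2 \<times> Itime)"]) (auto simp: P_I_def)
  have "AE p in \<mu>. (\<integral>q. hR \<beta> \<omega> p q \<partial>\<mu>) \<le> exp \<beta> / \<beta>"
    using S2
  proof eventually_elim
    case (elim p)
    show ?case
      using S2 by (intro integral_le_nonneg_const[OF bound])
        (auto elim!: eventually_mono intro: hR_le_exp assms(1) elim)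
  qed
  then have "(\<integral>p. (\<integral>q. hR \<beta> \<omega> p q \<partial>\<mu>) \<partial>\<mu>) \<le> exp \<beta> / \<beta>"
    by (rule integral_le_nonneg_const[OF bound])
  then show ?thesis by (simp add: ER_def)
qed

lemma continuous_on_hR: "continuous_on UNIV (\<lambda>(p, q). hR \<beta> \<omega> p q)"
  unfolding hR_def case_prod_beta divide_inverse by (intro continuous_intros)

lemma borel_measurable_hR_pair:
  assumes "sets M = sets borel" "sets N = sets borel"
  shows "(\<lambda>(p, q). hR \<beta> \<omega> p q) \<in> borel_measurable (M \<Otimes>\<^sub>M N)"
proof -
  have "(\<lambda>(p, q). hR \<beta> \<omega> p q) \<in> borel_measurable (borel \<Otimes>\<^sub>M borel)"
    unfolding borel_prod by (rule borel_measurable_continuous_onI[OF continuous_on_hR])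
  then show ?thesis
    by (subst measurable_cong_sets[OF sets_pair_measure_cong[OF assms] refl])
qed

lemma ER_Gamma:
  assumes [measurable]: "x \<in> borel_measurable borel"
  shows "ER \<beta> \<omega> (Gamma x) = (1/2) * (\<integral>s. (\<integral>t. hR \<beta> \<omega> (x s, s) (x t, t) \<partial>ds) \<partial>ds)"
proof -
  interpret ds: prob_space ds by (rule prob_space_ds)
  have graph [measurable]: "(\<lambda>s. (x s, s)) \<in> measurable ds borel"
    by measurable
  interpret G: prob_space "Gamma x"
    unfolding Gamma_def by (rule ds.prob_space_distr[OF graph])
  have "(\<lambda>p. \<integral>q. hR \<beta> \<omega> p q \<partial>Gamma x) \<in> borel_measurable borel"
    by (rule G.borel_measurable_lebesgue_integral)
      (rule borel_measurable_hR_pair, simp_all add: Gamma_def)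
  then have "(\<integral>p. (\<integral>q. hR \<beta> \<omega> p q \<partial>Gamma x) \<partial>Gamma x)
      = (\<integral>s. (\<integral>q. hR \<beta> \<omega> (x s, s) q \<partial>Gamma x) \<partial>ds)"
    unfolding Gamma_def by (rule integral_distr[OF graph])
  also have "\<dots> = (\<integral>s. (\<integral>t. hR \<beta> \<omega> (x s, s) (x t, t) \<partial>ds) \<partial>ds)"
  proof -
    have "hR \<beta> \<omega> p \<in> borel_measurable borel" for p
      by (rule borel_measurable_continuous_onI)
        (unfold hR_def divide_inverse, intro continuous_intros)
    then show ?thesis unfolding Gamma_def by (simp add: integral_distr[OF graph])
  qed
  finally show ?thesis by (simp add: ER_def)
qed

lemma hR_Rot_orbit:
  assumes "u \<in> S2"
  shows "hR \<beta> \<omega> (Rot (- \<omega> * s) u, s) (Rot (- \<omega> * t) u, t) = exp \<beta> / \<beta>"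
proof -
  have "Rot (\<omega> * (t - s)) (Rot (- \<omega> * t) u) = Rot (- \<omega> * s) u"
    by (simp add: Rot_add algebra_simps)
  moreover have "Rot (- \<omega> * s) u \<bullet> Rot (- \<omega> * s) u = 1"
    using assms by (simp add: norm_Rot S2_def flip: power2_norm_eq_inner)
  ultimately show ?thesis by (simp add: hR_def)
qed

lemma nn_integral_Ioc_eq_Icc:
  fixes f :: "real \<Rightarrow> ennreal"
  shows "(\<integral>\<^sup>+x. f x * indicator {a<..b} x \<partial>lborel) = (\<integral>\<^sup>+x. f x * indicator {a..b} x \<partial>lborel)"
  by (rule nn_integral_cong_AE)
    (use AE_lborel_singleton[of a] in \<open>eventually_elim, auto simp: indicator_def\<close>)

lemma nn_integral_Ioc_split:
  fixes f :: "real \<Rightarrow> ennreal"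
  assumes [measurable]: "f \<in> borel_measurable borel" and "a \<le> b" "b \<le> c"
  shows "(\<integral>\<^sup>+x. f x * indicator {a<..c} x \<partial>lborel)
    = (\<integral>\<^sup>+x. f x * indicator {a<..b} x \<partial>lborel) + (\<integral>\<^sup>+x. f x * indicator {b<..c} x \<partial>lborel)"
proof -
  have "indicator {a<..c} x = (indicator {a<..b} x + indicator {b<..c} x :: ennreal)" for x
    using assms by (auto simp: indicator_def)
  then show ?thesis by (simp add: distrib_left nn_integral_add)
qed

lemma nn_integral_periodic_shift:
  fixes g :: "real \<Rightarrow> ennreal"
  assumes [measurable]: "g \<in> borel_measurable borel" and per: "periodic_fun_simple g T"
  shows "(\<integral>\<^sup>+x. g x * indicator {a + of_int k * T<..b + of_int k * T} x \<partial>lborel)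
    = (\<integral>\<^sup>+x. g x * indicator {a<..b} x \<partial>lborel)"
proof -
  interpret periodic_fun_simple g T by (fact per)
  define c where "c = of_int k * T"
  let ?f = "\<lambda>x. g x * indicator {a + c<..b + c} x"
  have "?f \<in> borel_measurable borel" by measurable
  then have "(\<integral>\<^sup>+x. ?f x \<partial>lborel) = (\<integral>\<^sup>+x. ?f (c + x) \<partial>lborel)"
    using nn_integral_real_affine[of ?f 1 c] by simp
  also have "\<dots> = (\<integral>\<^sup>+x. g x * indicator {a<..b} x \<partial>lborel)"
  proof (rule nn_integral_cong)
    fix x
    have "g (c + x) = g x"
      using plus_of_int[of x k] by (simp add: c_def add.commute)
    then show "?f (c + x) = g x * indicator {a<..b} x"
      by (simp add: indicator_def)
  qed
  finally show ?thesis by (simp add: c_def)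
qed

lemma nn_integral_periodic_period:
  fixes g :: "real \<Rightarrow> ennreal"
  assumes g [measurable]: "g \<in> borel_measurable borel" and per: "periodic_fun_simple g T"
    and "T > 0"
  shows "(\<integral>\<^sup>+x. g x * indicator {a<..a + T} x \<partial>lborel) = (\<integral>\<^sup>+x. g x * indicator {0<..T} x \<partial>lborel)"
proof -
  \<comment> \<open>Shift \<open>a\<close> by whole periods into \<open>[0, T)\<close>; the part of \<open>(b, b + T]\<close> beyond \<open>T\<close>
    is then a shifted copy of \<open>(0, b]\<close>.\<close>
  define k where "k = \<lfloor>a / T\<rfloor>"
  define b where "b = a - of_int k * T"
  have b: "0 \<le> b" "b \<le> T"
    using \<open>T > 0\<close> floor_divide_lower[of T a] floor_divide_upper[of T a]
    by (simp_all add: b_def k_def algebra_simps)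
  have a_eq: "{a<..a + T} = {b + of_int k * T<..(b + T) + of_int k * T}"
    by (simp add: b_def)
  have T_eq: "{T<..b + T} = {0 + of_int 1 * T<..b + of_int 1 * T}"
    by simp
  have "(\<integral>\<^sup>+x. g x * indicator {a<..a + T} x \<partial>lborel)
      = (\<integral>\<^sup>+x. g x * indicator {b<..b + T} x \<partial>lborel)"
    unfolding a_eq by (rule nn_integral_periodic_shift[OF g per])
  also have "\<dots> = (\<integral>\<^sup>+x. g x * indicator {b<..T} x \<partial>lborel)
      + (\<integral>\<^sup>+x. g x * indicator {T<..b + T} x \<partial>lborel)"
    using b by (intro nn_integral_Ioc_split[OF g]) simp_all
  also have "(\<integral>\<^sup>+x. g x * indicator {T<..b + T} x \<partial>lborel)
      = (\<integral>\<^sup>+x. g x * indicator {0<..b} x \<partial>lborel)"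
    unfolding T_eq by (rule nn_integral_periodic_shift[OF g per])
  also have "(\<integral>\<^sup>+x. g x * indicator {b<..T} x \<partial>lborel) + \<dots>
      = (\<integral>\<^sup>+x. g x * indicator {0<..b} x \<partial>lborel) + (\<integral>\<^sup>+x. g x * indicator {b<..T} x \<partial>lborel)"
    by (rule add.commute)
  also have "\<dots> = (\<integral>\<^sup>+x. g x * indicator {0<..T} x \<partial>lborel)"
    using b by (intro nn_integral_Ioc_split[OF g, symmetric]) simp_all
  finally show ?thesis .
qed

lemma nn_integral_periodic_periods:
  fixes g :: "real \<Rightarrow> ennreal"
  assumes g [measurable]: "g \<in> borel_measurable borel" and per: "periodic_fun_simple g T"
    and "T > 0"
  shows "(\<integral>\<^sup>+x. g x * indicator {a<..a + real N * T} x \<partial>lborel)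
    = of_nat N * (\<integral>\<^sup>+x. g x * indicator {0<..T} x \<partial>lborel)"
proof (induction N)
  case (Suc N)
  have Suc_N: "a + real (Suc N) * T = (a + real N * T) + T"
    by (simp add: algebra_simps)
  have "(\<integral>\<^sup>+x. g x * indicator {a<..a + real (Suc N) * T} x \<partial>lborel)
      = (\<integral>\<^sup>+x. g x * indicator {a<..a + real N * T} x \<partial>lborel)
        + (\<integral>\<^sup>+x. g x * indicator {a + real N * T<..(a + real N * T) + T} x \<partial>lborel)"
    unfolding Suc_N by (rule nn_integral_Ioc_split[OF g]) (use \<open>T > 0\<close> in simp_all)
  also have "\<dots> = of_nat N * (\<integral>\<^sup>+x. g x * indicator {0<..T} x \<partial>lborel)
        + (\<integral>\<^sup>+x. g x * indicator {0<..T} x \<partial>lborel)"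
    by (simp only: Suc.IH nn_integral_periodic_period[OF g per \<open>T > 0\<close>])
  also have "\<dots> = of_nat (Suc N) * (\<integral>\<^sup>+x. g x * indicator {0<..T} x \<partial>lborel)"
    by (simp add: distrib_right)
  finally show ?case .
qed (simp add: indicator_def)

lemma affine_mem_Icc_iff:
  fixes c :: real
  assumes "c \<noteq> 0"
  shows "\<alpha> + c * s \<in> {min \<alpha> (\<alpha> + c)..min \<alpha> (\<alpha> + c) + \<bar>c\<bar>} \<longleftrightarrow> s \<in> {0..1}"
proof (cases "c > 0")
  case True
  then show ?thesis by (auto simp: zero_le_mult_iff mult_le_cancel_left1)
next
  case False
  with assms have "c < 0" by simp
  then show ?thesis by (auto simp: mult_le_0_iff mult_le_cancel_left1)
qed

lemma nn_integral_periodic_winding: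
  fixes g :: "real \<Rightarrow> ennreal" and m :: int
  assumes g [measurable]: "g \<in> borel_measurable borel" and per: "periodic_fun_simple g T"
    and "T > 0" and "m \<noteq> 0"
  shows "(\<integral>\<^sup>+s. g (\<alpha> + of_int m * T * s) * indicator {0<..1} s \<partial>lborel)
    = (\<integral>\<^sup>+x. g x * indicator {0..T} x \<partial>lborel) / ennreal T"
proof -
  define c where "c = of_int m * T"
  define N where "N = nat \<bar>m\<bar>"
  define lo where "lo = min \<alpha> (\<alpha> + c)"
  have "c \<noteq> 0" "N > 0" using assms by (simp_all add: c_def N_def)
  have abs_c: "\<bar>c\<bar> = real N * T" using \<open>T > 0\<close> by (simp add: c_def N_def abs_mult)
  have segment: "indicator {lo..lo + real N * T} (\<alpha> + c * s) = (indicator {0..1} s :: ennreal)"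
    for s
    using affine_mem_Icc_iff[OF \<open>c \<noteq> 0\<close>, of \<alpha> s] by (simp add: lo_def abs_c indicator_def)
  let ?L = "\<integral>\<^sup>+s. g (\<alpha> + c * s) * indicator {0<..1} s \<partial>lborel"
  let ?I = "\<integral>\<^sup>+x. g x * indicator {0<..T} x \<partial>lborel"
  have "of_nat N * ?I = (\<integral>\<^sup>+x. g x * indicator {lo<..lo + real N * T} x \<partial>lborel)"
    by (rule nn_integral_periodic_periods[OF g per \<open>T > 0\<close>, symmetric])
  also have "\<dots> = (\<integral>\<^sup>+x. g x * indicator {lo..lo + real N * T} x \<partial>lborel)"
    by (rule nn_integral_Ioc_eq_Icc)
  also have "\<dots> = ennreal \<bar>c\<bar>
      * (\<integral>\<^sup>+s. g (\<alpha> + c * s) * indicator {lo..lo + real N * T} (\<alpha> + c * s) \<partial>lborel)"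
    by (rule nn_integral_real_affine[OF _ \<open>c \<noteq> 0\<close>]) measurable
  also have "\<dots> = ennreal \<bar>c\<bar> * ?L"
    by (simp only: segment nn_integral_Ioc_eq_Icc)
  also have "\<dots> = of_nat N * (ennreal T * ?L)"
    using \<open>T > 0\<close> by (simp add: abs_c ennreal_mult' ennreal_of_nat_eq_real_of_nat mult.assoc)
  finally have "?I = ?L * ennreal T"
    using \<open>N > 0\<close> by (simp add: ennreal_mult_cancel_left mult.commute)
  moreover have "ennreal T \<noteq> 0" using \<open>T > 0\<close> by simp
  ultimately have "?L = ?I / ennreal T"
    by (simp add: ennreal_mult_divide_eq)
  then show ?thesis by (simp add: c_def nn_integral_Ioc_eq_Icc)
qed

lemma distr_ds_periodic_winding:
  fixes P :: "real \<Rightarrow> 'a::topological_space" and m :: int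
  assumes P [measurable]: "P \<in> borel_measurable borel" and per: "periodic_fun_simple P T"
    and "T > 0" and "m \<noteq> 0"
  shows "distr ds borel (\<lambda>s. P (\<alpha> + of_int m * T * s))
    = distr (uniform_measure lborel {0..T}) borel P"
proof (rule measure_eqI)
  fix A assume "A \<in> sets (distr ds borel (\<lambda>s. P (\<alpha> + of_int m * T * s)))"
  then have [measurable]: "A \<in> sets borel" by simp
  define g where "g = (\<lambda>x. indicator A (P x) :: ennreal)"
  have g [measurable]: "g \<in> borel_measurable borel" unfolding g_def by measurable
  have [measurable]: "(\<lambda>s. P (\<alpha> + of_int m * T * s)) \<in> measurable ds borel"
    by measurable
  have g_per: "periodic_fun_simple g T"
    using per by (simp add: periodic_fun_simple_def g_def)
  have "emeasure (distr ds borel (\<lambda>s. P (\<alpha> + of_int m * T * s))) A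
      = (\<integral>\<^sup>+s. g (\<alpha> + of_int m * T * s) \<partial>ds)"
    by (simp add: nn_integral_distr g_def flip: nn_integral_indicator)
  also have "\<dots> = (\<integral>\<^sup>+x. g x * indicator {0..T} x \<partial>lborel) / ennreal T"
    by (simp add: nn_integral_ds nn_integral_periodic_winding[OF g g_per \<open>T > 0\<close> \<open>m \<noteq> 0\<close>])
  also have "\<dots> = (\<integral>\<^sup>+x. g x \<partial>uniform_measure lborel {0..T})"
    using \<open>T > 0\<close> by (simp add: nn_integral_uniform_measure)
  also have "\<dots> = emeasure (distr (uniform_measure lborel {0..T}) borel P) A"
    by (simp add: nn_integral_distr g_def flip: nn_integral_indicator)
  finally show "emeasure (distr ds borel (\<lambda>s. P (\<alpha> + of_int m * T * s))) A
      = emeasure (distr (uniform_measure lborel {0..T}) borel P) A" .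
qed simp

theorem corollary3p2:
  fixes \<beta> \<omega> \<theta> :: real and m :: int and u :: "real^3"
  assumes "\<beta> > 0"
    and "m \<noteq> 0"
    and "\<omega> = 2 * pi * real_of_int m"
    and "u \<in> S2"
    and "0 \<le> \<theta>" and "\<theta> \<le> pi"
    and "u \<bullet> axis 3 1 = cos \<theta>"
  defines "xstar \<equiv> (\<lambda>s. Rot (- \<omega> * s) u)"
  shows "Gamma xstar \<in> P_I
         \<and> (\<forall>\<mu>\<in>P_I. ER \<beta> \<omega> \<mu> \<le> ER \<beta> \<omega> (Gamma xstar))
         \<and> distr ds borel xstar = circle_uniform \<theta>"
proof (intro conjI ballI)
  have xstar: "xstar \<in> borel_measurable borel"
    unfolding xstar_def by (intro borel_measurable_continuous_onI continuous_intros)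
  show "Gamma xstar \<in> P_I"
    using xstar by (rule Gamma_in_P_I) (use \<open>u \<in> S2\<close> in \<open>simp add: xstar_def S2_def norm_Rot\<close>)
  fix \<mu> assume "\<mu> \<in> P_I"
  have "ER \<beta> \<omega> (Gamma xstar) = (1/2) * (\<integral>s. (\<integral>t. hR \<beta> \<omega> (xstar s, s) (xstar t, t) \<partial>ds) \<partial>ds)"
    by (rule ER_Gamma[OF xstar])
  also have "\<dots> = exp \<beta> / (2 * \<beta>)"
    unfolding xstar_def hR_Rot_orbit[OF \<open>u \<in> S2\<close>]
    using prob_space.prob_space[OF prob_space_ds] by simp
  finally show "ER \<beta> \<omega> \<mu> \<le> ER \<beta> \<omega> (Gamma xstar)"
    using ER_le_P_I[OF \<open>\<beta> > 0\<close> \<open>\<mu> \<in> P_I\<close>] by simp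
next
  obtain \<alpha> where u: "u = latitude_point \<theta> \<alpha>"
    using S2_obtain_latitude_point[OF assms(4-7)] .
  have xstar_winding: "xstar = (\<lambda>s. latitude_point \<theta> (\<alpha> + of_int (- m) * (2 * pi) * s))"
    using assms(3) by (simp add: xstar_def u Rot_latitude_point algebra_simps)
  show "distr ds borel xstar = circle_uniform \<theta>"
    unfolding xstar_winding circle_uniform_eq
    by (rule distr_ds_periodic_winding[OF _ periodic_latitude_point])
      (use \<open>m \<noteq> 0\<close> continuous_on_latitude_point in
        \<open>simp_all add: borel_measurable_continuous_onI\<close>)
qed

end
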